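(* Fix a calendar time $t$ and a cutoff $T^*>0$. Assume (Adjusted Assumption 1) $\phi(u)=\beta_{T^*}$ for all $u\ge T^*$, for some constant $\beta_{T^*}$; and (Adjusted Assumption 2) $f_t(t-u)=f_t(t)$ for all $u\in[0,T^*]$, where $f_t(s)$ is the conditional density at $s$ of $T$ given $\{T\le t,A(t)=1\}$. Let $\Omega_{T^*}=\int_0^{T^*}\phi(u)\,du$ and assume $\Omega_{T^*}-\beta_{T^*}T^*\neq0$, $p(t)<1$, and $p$ continuous. Then $$P_{rec}(t)=(\Omega_{T^*}-\beta_{T^*}T^* )\,\lambda(t)\{1-p(t)\}+p(t)\beta_{T^*},\qquad\text{i.e.}\qquad \lambda(t)=\frac{P_{rec}(t)-\beta_{T^*}p(t)}{\{1-p(t)\}(\Omega_{T^*}-\beta_{T^*}T^* )}.$$ (Consequently the adjusted estimator $\tilde\lambda=(N_{rec}-N_{pos}\hat\beta_{T^*})/\{N_{neg}(\hat\Omega_{T^*}-\hat\beta_{T^*}T^* )\}$ is the plug-in estimator of $\lambda(t)$.)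
   Context: $T$ is the (calendar) HIV infection time of a subject, a random variable with densities as needed; $A(t)\in\{0,1\}$ indicates eligibility for the target population at calendar time $t$. Prevalence: $p(t)=\Pr(T\le t\mid A(t)=1)$. Incidence: $\lambda(t)=\lim_{dt\to0}\frac1{dt}\Pr(t\le T<t+dt\mid T\ge t, A(t)=1)$. $M$ is the biomarker value of a recency test and $\mathcal R$ a fixed "test-recent" region. $\phi(u)=\Pr(M\in\mathcal R\mid T=t-u, A(t)=1)$ for $u\ge0$, assumed not to depend on $t$. $P_{rec}(t)=\Pr(M\in\mathcal R, T\le t\mid A(t)=1)$. $\Omega_{T^*}$ is the mean duration of recent infection (MDRI), $\beta_{T^*}$ the false-recent rate (FRR). $N_{rec},N_{pos},N_{neg}$ are the numbers of test-recent, HIV-positive and HIV-negative subjects in a random sample from the population eligible at $t$; hats denote estimates. *)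

theory Defs
  imports "HOL-Probability.Probability"
begin

definition elig :: "'a measure \<Rightarrow> (real \<Rightarrow> 'a \<Rightarrow> bool) \<Rightarrow> real \<Rightarrow> 'a set" where
  "elig P A t = {\<omega> \<in> space P. A t \<omega>}"

definition cprob :: "'a measure \<Rightarrow> 'a set \<Rightarrow> 'a set \<Rightarrow> real" where
  "cprob P X Y = measure P (X \<inter> Y) / measure P Y"

definition prevalence :: "'a measure \<Rightarrow> ('a \<Rightarrow> real) \<Rightarrow> (real \<Rightarrow> 'a \<Rightarrow> bool) \<Rightarrow> real \<Rightarrow> real" where
  "prevalence P T A t = cprob P {\<omega> \<in> space P. T \<omega> \<le> t} (elig P A t)"

definition P_rec :: "'a measure \<Rightarrow> ('a \<Rightarrow> real) \<Rightarrow> (real \<Rightarrow> 'a \<Rightarrow> bool) \<Rightarrow> ('a \<Rightarrow> 'b) \<Rightarrow> 'b set \<Rightarrow> real \<Rightarrow> real" where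
  "P_rec P T A Mk R t = cprob P {\<omega> \<in> space P. Mk \<omega> \<in> R \<and> T \<omega> \<le> t} (elig P A t)"

definition hazard_quot :: "'a measure \<Rightarrow> ('a \<Rightarrow> real) \<Rightarrow> (real \<Rightarrow> 'a \<Rightarrow> bool) \<Rightarrow> real \<Rightarrow> real \<Rightarrow> real" where
  "hazard_quot P T A t dt =
     cprob P {\<omega> \<in> space P. t \<le> T \<omega> \<and> T \<omega> < t + dt}
             ({\<omega> \<in> space P. t \<le> T \<omega>} \<inter> elig P A t) / dt"

definition incidence :: "'a measure \<Rightarrow> ('a \<Rightarrow> real) \<Rightarrow> (real \<Rightarrow> 'a \<Rightarrow> bool) \<Rightarrow> real \<Rightarrow> real" where
  "incidence P T A t = Lim (at_right 0) (hazard_quot P T A t)"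

definition cond_density :: "'a measure \<Rightarrow> ('a \<Rightarrow> real) \<Rightarrow> 'a set \<Rightarrow> (real \<Rightarrow> real) \<Rightarrow> bool" where
  "cond_density P T X f \<longleftrightarrow>
     (\<forall>s. 0 \<le> f s) \<and> distributed (uniform_measure P X) lborel T (\<lambda>s. ennreal (f s))"

text \<open>phi(u) = Pr(M in R | T = t - u, A(t) = 1), u \<ge> 0, as a version of the conditional
  probability: for every Borel B \<subseteq> (-\<infinity>, t],
  Pr(M in R, T in B | A(t)=1) = \<integral>_B phi(t - s) dP_{T | A(t)=1}(s).\<close>
definition is_recency_fn :: "'a measure \<Rightarrow> ('a \<Rightarrow> real) \<Rightarrow> (real \<Rightarrow> 'a \<Rightarrow> bool) \<Rightarrow> ('a \<Rightarrow> 'b) \<Rightarrow> 'b set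
    \<Rightarrow> real \<Rightarrow> (real \<Rightarrow> real) \<Rightarrow> bool" where
  "is_recency_fn P T A Mk R t \<phi> \<longleftrightarrow>
     \<phi> \<in> borel_measurable borel \<and> (\<forall>u\<ge>0. 0 \<le> \<phi> u \<and> \<phi> u \<le> 1) \<and>
     (\<forall>B \<in> sets borel. B \<subseteq> {..t} \<longrightarrow>
        cprob P {\<omega> \<in> space P. Mk \<omega> \<in> R \<and> T \<omega> \<in> B} (elig P A t) =
        (LINT s:B | distr (uniform_measure P (elig P A t)) lborel T. \<phi> (t - s)))"

definition MDRI :: "(real \<Rightarrow> real) \<Rightarrow> real \<Rightarrow> real" where
  "MDRI \<phi> Ts = (LBINT u=0..Ts. \<phi> u)"

end

(*
  Let D be the law of the infection time T among those eligible at t, with density g, so that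
  p = D(-oo, t]. The hazard quotient equals D[t, t+h) / (h (1 - p)), which tends to g t / (1 - p)
  by continuity of g at t; hence lambda = g t / (1 - p). Conditioning further on T <= t divides D
  by p, so Adjusted Assumption 2 says that D has the constant density p f(t) on [t - T^*, t], and
  continuity of g forces g t = p f(t). Finally P_rec = int_{s <= t} phi(t - s) dD(s): on
  s <= t - T^* the integrand is beta, giving beta (p - T^* g t), and on the window (t - T^*, t) the
  density is g t, giving g t Omega. Substituting g t = lambda (1 - p) yields the identity.
*)
theory Submission
  imports Defs
begin

abbreviation density_law :: "(real \<Rightarrow> real) \<Rightarrow> real measure" where
  "density_law g \<equiv> density lborel (\<lambda>s. ennreal (g s))"

lemma interval_integral_reflect:
  fixes \<phi> :: "real \<Rightarrow> real" and r t :: real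
  assumes "0 < r"
  shows "(LBINT u=0..r. \<phi> u) = (\<integral>s. indicator {t-r<..<t} s * \<phi> (t - s) \<partial>lborel)"
proof -
  have "(LBINT u=0..r. \<phi> u) = (\<integral>u. indicator {0<..<r} u * \<phi> u \<partial>lborel)"
    using assms by (simp add: interval_lebesgue_integral_def set_lebesgue_integral_def zero_ereal_def)
  also have "\<dots> = \<bar>-1\<bar> *\<^sub>R (\<integral>s. indicator {0<..<r} (t + (-1) * s) * \<phi> (t + (-1) * s) \<partial>lborel)"
    by (rule lborel_integral_real_affine) simp
  also have "\<dots> = (\<integral>s. indicator {t-r<..<t} s * \<phi> (t - s) \<partial>lborel)"
    by (simp, rule Bochner_Integration.integral_cong) (auto simp: indicator_def)
  finally show ?thesis .
qed

locale real_density =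
  fixes g :: "real \<Rightarrow> real"
  assumes borel_measurable_density [measurable]: "g \<in> borel_measurable borel"
    and density_nonneg: "\<And>s. 0 \<le> g s"
    and prob_space_law: "prob_space (density_law g)"
begin

sublocale law: prob_space "density_law g"
  by (rule prob_space_law)

lemma integrable_density: "integrable lborel g"
proof -
  have "(\<integral>\<^sup>+ x. ennreal (g x) \<partial>lborel) = 1"
    using law.emeasure_space_1 by (simp add: emeasure_density)
  then show ?thesis
    using density_nonneg by (intro integrableI_nonneg) auto
qed

lemma measure_law:
  assumes "S \<in> sets borel"
  shows "measure (density_law g) S = (LINT x:S|lborel. g x)"
proof -
  have int: "integrable lborel (\<lambda>x. g x * indicator S x)"
    using integrable_mult_indicator[of S lborel g] integrable_density assms by (simp add: mult.commute)
  have "emeasure (density_law g) S = (\<integral>\<^sup>+ x. ennreal (g x * indicator S x) \<partial>lborel)"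
    using assms by (simp add: emeasure_density) (auto intro: nn_integral_cong simp: indicator_def)
  also have "\<dots> = ennreal (\<integral> x. g x * indicator S x \<partial>lborel)"
    using int density_nonneg by (intro nn_integral_eq_integral) auto
  finally show ?thesis
    unfolding measure_def set_lebesgue_integral_def
    using density_nonneg by (simp add: mult.commute integral_nonneg_AE)
qed

lemma measure_law_singleton: "measure (density_law g) {x} = 0"
proof -
  have "emeasure (density_law g) {x} = (\<integral>\<^sup>+ y. ennreal (g x) * indicator {x} y \<partial>lborel)"
    by (auto simp: emeasure_density intro: nn_integral_cong simp: indicator_def)
  then show ?thesis
    by (simp add: measure_def)
qed

lemma measure_law_approx:
  assumes S: "S \<in> sets borel" "S \<subseteq> {a..b}" and close: "\<And>x. x \<in> {a..b} \<Longrightarrow> \<bar>g x - c\<bar> \<le> e"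
  shows "\<bar>measure (density_law g) S - c * measure lborel S\<bar> \<le> e * measure lborel S"
proof -
  have fin: "emeasure lborel S < \<infinity>"
    using S by (intro emeasure_bounded_finite bounded_subset[OF bounded_closed_interval])
  have const_int: "set_integrable lborel S (\<lambda>_. k)" for k :: real
    using fin S integrable_indicator[of S lborel] integrable_mult_right
    by (auto simp: set_integrable_def mult.commute)
  have g_int: "set_integrable lborel S g"
    using integrable_mult_indicator[of S lborel g] integrable_density S
    by (simp add: set_integrable_def)
  have diff_int: "set_integrable lborel S (\<lambda>x. g x - c)"
    using g_int const_int by (rule set_integral_diff)
  have "measure (density_law g) S - c * measure lborel S = (LINT x:S|lborel. g x - c)"
    using measure_law[OF S(1)] g_int const_int fin S(1)
    by (simp add: set_integral_diff set_integral_const less_top mult.commute)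
  also have "\<bar>\<dots>\<bar> \<le> (LINT x:S|lborel. \<bar>g x - c\<bar>)"
    using set_integral_norm_bound[OF diff_int] by simp
  also have "\<dots> \<le> (LINT x:S|lborel. e)"
    using diff_int const_int close S by (intro set_integral_mono) (auto simp: set_integrable_abs)
  also have "\<dots> = e * measure lborel S"
    using fin S(1) by (simp add: set_integral_const less_top mult.commute)
  finally show ?thesis .
qed

lemma law_quotient_tendsto:
  assumes cont: "isCont g t"
    and S: "\<And>h. 0 < h \<Longrightarrow> S h \<in> sets borel" "\<And>h. 0 < h \<Longrightarrow> S h \<subseteq> {t-h..t+h}"
    and length: "\<And>h. 0 < h \<Longrightarrow> measure lborel (S h) = h"
  shows "((\<lambda>h. measure (density_law g) (S h) / h) \<longlongrightarrow> g t) (at_right 0)"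
proof (rule tendstoI)
  fix e :: real assume e: "e > 0"
  then obtain d where d: "d > 0" "\<And>x. dist x t < d \<Longrightarrow> dist (g x) (g t) < e/2"
    using cont unfolding continuous_at_eps_delta by (meson half_gt_zero)
  have "dist (measure (density_law g) (S h) / h) (g t) < e" if h: "0 < h" "h < d" for h
  proof -
    have "\<bar>g x - g t\<bar> \<le> e/2" if "x \<in> {t-h..t+h}" for x
    proof -
      have "dist x t < d"
        using that h by (auto simp: dist_real_def)
      then show ?thesis
        using d(2)[of x] by (simp add: dist_real_def)
    qed
    then have "\<bar>measure (density_law g) (S h) - g t * h\<bar> \<le> e/2 * h"
      using measure_law_approx[OF S(1,2), of h "g t" "e/2"] h length[OF h(1)] by simp
    then have "\<bar>measure (density_law g) (S h) / h - g t\<bar> \<le> e/2"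
      using h(1) by (simp add: field_simps)
    then show ?thesis
      using e by (simp add: dist_real_def)
  qed
  then show "\<forall>\<^sub>F h in at_right 0. dist (measure (density_law g) (S h) / h) (g t) < e"
    unfolding eventually_at_right_field using d(1) by blast
qed

lemma density_eq_of_uniform_left:
  assumes cont: "isCont g t" and "0 < r"
    and uniform: "\<And>h. 0 < h \<Longrightarrow> h \<le> r \<Longrightarrow> measure (density_law g) {t-h..t} = c * h"
  shows "g t = c"
proof (rule tendsto_unique)
  show "((\<lambda>h. measure (density_law g) {t-h..t} / h) \<longlongrightarrow> g t) (at_right 0)"
    by (rule law_quotient_tendsto[OF cont]) auto
  have eventually_c: "\<forall>\<^sub>F h in at_right 0. c = measure (density_law g) {t-h..t} / h"
    unfolding eventually_at_right_field using \<open>0 < r\<close> uniform by (intro exI[of _ r]) auto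
  show "((\<lambda>h. measure (density_law g) {t-h..t} / h) \<longlongrightarrow> c) (at_right 0)"
    using tendsto_cong[OF eventually_c, of c] by simp
qed simp

lemma AE_density_eq_of_uniform:
  assumes I: "I \<in> sets borel" "emeasure lborel I < \<infinity>"
    and uniform: "\<And>B. B \<in> sets borel \<Longrightarrow> B \<subseteq> I \<Longrightarrow> measure (density_law g) B = c * measure lborel B"
  shows "AE s in lborel. s \<in> I \<longrightarrow> g s = c"
proof -
  have "AE s in lborel. g s * indicator I s = c * indicator I s"
  proof (rule density_unique_real)
    show "integrable lborel (\<lambda>s. g s * indicator I s)"
      using integrable_mult_indicator[of I lborel g] integrable_density I by (simp add: mult.commute)
    show "integrable lborel (\<lambda>s. c * indicator I s)"
      using integrable_indicator[of I lborel] I by simp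
    fix S :: "real set" assume S: "S \<in> sets lborel"
    then have SI: "S \<inter> I \<in> sets borel"
      using I by auto
    have "(LINT x:S|lborel. g x * indicator I x) = (LINT x:S \<inter> I|lborel. g x)"
      unfolding set_lebesgue_integral_def
      by (rule Bochner_Integration.integral_cong) (auto simp: indicator_def)
    also have "\<dots> = c * measure lborel (S \<inter> I)"
      using measure_law[OF SI] uniform[OF SI] by simp
    also have "\<dots> = (LINT x:S|lborel. c * indicator I x)"
      using emeasure_mono[of "S \<inter> I" I lborel] I SI
      unfolding set_lebesgue_integral_def
      by (simp add: indicator_inter_arith[symmetric] mult.left_commute less_top[symmetric]
          order.strict_trans1)
    finally show "(LINT x:S|lborel. g x * indicator I x) = (LINT x:S|lborel. c * indicator I x)" .
  qed
  then show ?thesis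
    by eventually_elim (auto simp: indicator_def)
qed

lemma set_integral_law_lag:
  fixes \<phi> :: "real \<Rightarrow> real"
  assumes [measurable]: "\<phi> \<in> borel_measurable borel"
    and bounded: "\<And>u. 0 \<le> u \<Longrightarrow> \<bar>\<phi> u\<bar> \<le> 1"
    and r: "0 < r" and tail: "\<And>u. r \<le> u \<Longrightarrow> \<phi> u = \<beta>"
    and uniform: "\<And>B. B \<in> sets borel \<Longrightarrow> B \<subseteq> {t-r..t} \<Longrightarrow>
        measure (density_law g) B = c * measure lborel B"
  shows "(LINT s:{..t}|density_law g. \<phi> (t - s))
     = \<beta> * (measure (density_law g) {..t} - c * r) + c * (LBINT u=0..r. \<phi> u)"
proof -
  let ?I = "{t-r<..<t}"
  have flat: "AE s in lborel. s \<in> ?I \<longrightarrow> g s = c"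
  proof (rule AE_density_eq_of_uniform)
    fix B assume "B \<in> sets borel" "B \<subseteq> ?I"
    then show "measure (density_law g) B = c * measure lborel B"
      by (intro uniform) auto
  qed (use r in auto)
  have split: "AE s in lborel. g s * (indicator {..t} s * \<phi> (t - s))
      = \<beta> * (g s * indicator {..t-r} s) + c * (indicator ?I s * \<phi> (t - s))"
    using flat AE_lborel_singleton[of t]
  proof eventually_elim
    case (elim s)
    show ?case
    proof (cases "s \<le> t - r")
      case True
      with tail[of "t - s"] r show ?thesis
        by (auto simp: indicator_def)
    qed (use elim in \<open>auto simp: indicator_def\<close>)
  qed
  have tail_int: "integrable lborel (\<lambda>s. g s * indicator {..t-r} s)"
    using integrable_mult_indicator[of "{..t-r}" lborel g] integrable_density by (simp add: mult.commute)
  have window_int: "integrable lborel (\<lambda>s. indicator ?I s * \<phi> (t - s))"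
  proof -
    have "AE s in lborel. s \<in> ?I \<longrightarrow> norm (\<phi> (t - s)) \<le> 1"
      using bounded by auto
    then show ?thesis
      using integrableI_bounded_set_indicator[of ?I lborel "\<lambda>s. \<phi> (t - s)" 1] r by simp
  qed
  have "(LINT s:{..t}|density_law g. \<phi> (t - s)) = (\<integral>s. g s * (indicator {..t} s * \<phi> (t - s)) \<partial>lborel)"
    unfolding set_lebesgue_integral_def
    using integral_density[of "\<lambda>s. indicator {..t} s *\<^sub>R \<phi> (t - s)" lborel g] density_nonneg
    by simp
  also have "\<dots> = \<beta> * (\<integral>s. g s * indicator {..t-r} s \<partial>lborel) + c * (\<integral>s. indicator ?I s * \<phi> (t - s) \<partial>lborel)"
    using tail_int window_int by (simp add: integral_cong_AE[OF _ _ split])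
  also have "(\<integral>s. g s * indicator {..t-r} s \<partial>lborel) = measure (density_law g) {..t-r}"
    using measure_law[of "{..t-r}"] by (simp add: set_lebesgue_integral_def mult.commute)
  also have "\<dots> = measure (density_law g) {..t} - measure (density_law g) {t-r<..t}"
    using r law.finite_measure_Union[of "{..t-r}" "{t-r<..t}"] by (simp add: ivl_disj_un disjoint_iff)
  also have "measure (density_law g) {t-r<..t} = c * r"
    using uniform[of "{t-r<..t}"] r by (simp add: subset_iff)
  also have "(\<integral>s. indicator ?I s * \<phi> (t - s) \<partial>lborel) = (LBINT u=0..r. \<phi> u)"
    using interval_integral_reflect[OF r, of \<phi> t] by simp
  finally show ?thesis .
qed

end

lemma measure_density_law_const:
  assumes "(\<lambda>s. ennreal (f s)) \<in> borel_measurable lborel" "0 \<le> c" "B \<in> sets borel"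
    and const: "\<And>x. x \<in> B \<Longrightarrow> f x = c"
  shows "measure (density_law f) B = c * measure lborel B"
proof -
  have "emeasure (density_law f) B = (\<integral>\<^sup>+ x. ennreal c * indicator B x \<partial>lborel)"
    using assms by (auto simp: emeasure_density intro!: nn_integral_cong split: split_indicator)
  also have "\<dots> = ennreal c * emeasure lborel B"
    using assms(3) by (simp add: nn_integral_cmult_indicator)
  finally show ?thesis
    using assms(2) by (simp add: measure_def enn2real_mult)
qed

lemma cond_density_law:
  assumes "prob_space P" and [measurable]: "T \<in> borel_measurable P"
    and X: "X \<in> sets P" "measure P X > 0" and cond: "cond_density P T X h"
  shows "real_density h"
    and "distr (uniform_measure P X) lborel T = density_law h"
    and "\<And>B. B \<in> sets borel \<Longrightarrow> cprob P {\<omega> \<in> space P. T \<omega> \<in> B} X = measure (density_law h) B"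
proof -
  interpret P: prob_space P by fact
  have X_nonnull: "emeasure P X \<noteq> 0" "emeasure P X \<noteq> \<infinity>"
    using X by (auto simp: P.emeasure_eq_measure)
  interpret Q: prob_space "uniform_measure P X"
    using prob_space_uniform_measure[OF X_nonnull] .
  have nonneg: "\<And>s. 0 \<le> h s" and distr_eq: "distr (uniform_measure P X) lborel T = density_law h"
    and h_measurable: "(\<lambda>s. ennreal (h s)) \<in> borel_measurable lborel"
    and T_measurable: "T \<in> measurable (uniform_measure P X) lborel"
    using cond by (auto simp: cond_density_def distributed_def)
  show "distr (uniform_measure P X) lborel T = density_law h"
    by (fact distr_eq)
  have "(\<lambda>s. enn2real (ennreal (h s))) \<in> borel_measurable borel"
    using h_measurable by (intro borel_measurable_enn2real) simp
  then show "real_density h"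
    using nonneg Q.prob_space_distr[OF T_measurable] distr_eq by (simp add: real_density_def)
  fix B :: "real set" assume [measurable]: "B \<in> sets borel"
  have "measure (density_law h) B = measure (uniform_measure P X) (T -` B \<inter> space (uniform_measure P X))"
    using measure_distr[OF T_measurable, of B] distr_eq by simp
  also have "T -` B \<inter> space (uniform_measure P X) = {\<omega> \<in> space P. T \<omega> \<in> B}"
    by auto
  also have "measure (uniform_measure P X) \<dots> = measure P (X \<inter> {\<omega> \<in> space P. T \<omega> \<in> B}) / measure P X"
    using X_nonnull by (intro measure_uniform_measure) measurable
  finally show "cprob P {\<omega> \<in> space P. T \<omega> \<in> B} X = measure (density_law h) B"
    by (simp add: cprob_def Int_commute)
qed

locale eligible_population =
  fixes P :: "'a measure" and T :: "'a \<Rightarrow> real" and A :: "real \<Rightarrow> 'a \<Rightarrow> bool"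
    and t :: real and g :: "real \<Rightarrow> real"
  assumes prob_space_P: "prob_space P"
    and T_measurable [measurable]: "T \<in> borel_measurable P"
    and elig_sets [measurable]: "elig P A t \<in> sets P"
    and elig_pos: "measure P (elig P A t) > 0"
    and elig_law: "cond_density P T (elig P A t) g"
begin

interpretation P: prob_space P
  by (rule prob_space_P)

sublocale law: real_density g
  by (rule cond_density_law(1)[OF prob_space_P T_measurable elig_sets elig_pos elig_law])

lemma cprob_elig_law:
  "B \<in> sets borel \<Longrightarrow> cprob P {\<omega> \<in> space P. T \<omega> \<in> B} (elig P A t) = measure (density_law g) B"
  by (rule cond_density_law(3)[OF prob_space_P T_measurable elig_sets elig_pos elig_law])

lemma prevalence_law: "prevalence P T A t = measure (density_law g) {..t}"
  using cprob_elig_law[of "{..t}"] by (simp add: prevalence_def)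

lemma law_atLeast: "measure (density_law g) {t..} = 1 - prevalence P T A t"
proof -
  have "{..t} = {..<t} \<union> {t}"
    by auto
  then have "measure (density_law g) {..t} = measure (density_law g) {..<t}"
    using law.law.finite_measure_Union[of "{..<t}" "{t}"] law.measure_law_singleton[of t] by simp
  moreover have "measure (density_law g) {t..} = 1 - measure (density_law g) {..<t}"
    using law.law.prob_compl[of "{..<t}"] by (simp add: Compl_eq_Diff_UNIV[symmetric])
  ultimately show ?thesis
    by (simp add: prevalence_law)
qed

lemma hazard_quot_law:
  assumes "0 < dt"
  shows "hazard_quot P T A t dt = measure (density_law g) {t..<t+dt} / (1 - prevalence P T A t) / dt"
proof -
  let ?E = "elig P A t"
  let ?S = "{\<omega> \<in> space P. T \<omega> \<in> {t..<t+dt}}" and ?U = "{\<omega> \<in> space P. T \<omega> \<in> {t..}}"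
  have "cprob P ?S (?U \<inter> ?E) = cprob P ?S ?E / cprob P ?U ?E"
    using elig_pos by (simp add: cprob_def Int_assoc[symmetric] Int_absorb2 subset_eq)
  also have "\<dots> = measure (density_law g) {t..<t+dt} / (1 - prevalence P T A t)"
    using cprob_elig_law[of "{t..<t+dt}"] cprob_elig_law[of "{t..}"] law_atLeast by simp
  finally show ?thesis
    by (simp add: hazard_quot_def Collect_conj_eq[symmetric] conj_commute)
qed

lemma hazard_quot_tendsto:
  assumes cont: "isCont g t" and "prevalence P T A t < 1"
  shows "(hazard_quot P T A t \<longlongrightarrow> g t / (1 - prevalence P T A t)) (at_right 0)"
proof -
  have "((\<lambda>h. measure (density_law g) {t..<t+h} / h) \<longlongrightarrow> g t) (at_right 0)"
    by (rule law.law_quotient_tendsto[OF cont]) auto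
  then have "((\<lambda>h. measure (density_law g) {t..<t+h} / h / (1 - prevalence P T A t))
      \<longlongrightarrow> g t / (1 - prevalence P T A t)) (at_right 0)"
    using assms(2) by (intro tendsto_divide tendsto_const) auto
  moreover have "\<forall>\<^sub>F h in at_right 0.
      measure (density_law g) {t..<t+h} / h / (1 - prevalence P T A t) = hazard_quot P T A t h"
    unfolding eventually_at_right_field by (intro exI[of _ 1]) (auto simp: hazard_quot_law)
  ultimately show ?thesis
    by (rule Lim_transform_eventually)
qed

lemma law_restrict_infected:
  assumes cond: "cond_density P T ({\<omega> \<in> space P. T \<omega> \<le> t} \<inter> elig P A t) f"
    and B: "B \<in> sets borel" "B \<subseteq> {..t}"
  shows "measure (density_law g) B = prevalence P T A t * measure (density_law f) B"
proof (cases "prevalence P T A t = 0")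
  case True
  then have "measure (density_law g) B \<le> 0"
    using law.law.finite_measure_mono[of B "{..t}"] B by (simp add: prevalence_law)
  with True show ?thesis
    by (simp add: antisym)
next
  case False
  let ?E = "elig P A t" and ?B = "{\<omega> \<in> space P. T \<omega> \<in> B}"
  let ?X = "{\<omega> \<in> space P. T \<omega> \<le> t} \<inter> ?E"
  have infected: "measure P ?X = prevalence P T A t * measure P ?E"
    using elig_pos by (simp add: prevalence_def cprob_def)
  have "prevalence P T A t > 0"
    using False by (simp add: prevalence_law less_le)
  then have "measure P ?X > 0"
    using infected elig_pos by simp
  then have "measure (density_law f) B = measure P (?B \<inter> ?X) / measure P ?X"
    using cond_density_law(3)[OF prob_space_P T_measurable _ _ cond B(1)] by (simp add: cprob_def)
  also have "?B \<inter> ?X = ?B \<inter> ?E"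
    using B(2) by auto
  also have "measure P (?B \<inter> ?E) = measure (density_law g) B * measure P ?E"
    using cprob_elig_law[OF B(1)] elig_pos by (simp add: cprob_def divide_eq_eq)
  finally show ?thesis
    using infected False elig_pos by (simp add: field_simps)
qed

lemma P_rec_law:
  assumes "is_recency_fn P T A Mk R t \<phi>"
  shows "P_rec P T A Mk R t = (LINT s:{..t}|density_law g. \<phi> (t - s))"
proof -
  have "cprob P {\<omega> \<in> space P. Mk \<omega> \<in> R \<and> T \<omega> \<in> {..t}} (elig P A t)
      = (LINT s:{..t}|distr (uniform_measure P (elig P A t)) lborel T. \<phi> (t - s))"
    using assms[unfolded is_recency_fn_def, THEN conjunct2, THEN conjunct2, rule_format, of "{..t}"]
    by simp
  then show ?thesis
    using cond_density_law(2)[OF prob_space_P T_measurable elig_sets elig_pos elig_law]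
    by (simp add: P_rec_def)
qed

lemma P_rec_split:
  assumes rec: "is_recency_fn P T A Mk R t \<phi>" and "0 < r" and tail: "\<And>u. r \<le> u \<Longrightarrow> \<phi> u = \<beta>"
    and uniform: "\<And>B. B \<in> sets borel \<Longrightarrow> B \<subseteq> {t-r..t} \<Longrightarrow>
        measure (density_law g) B = c * measure lborel B"
  shows "P_rec P T A Mk R t = \<beta> * (prevalence P T A t - c * r) + c * MDRI \<phi> r"
proof -
  have "\<phi> \<in> borel_measurable borel" "\<And>u. 0 \<le> u \<Longrightarrow> \<bar>\<phi> u\<bar> \<le> 1"
    using rec by (auto simp: is_recency_fn_def)
  then show ?thesis
    unfolding P_rec_law[OF rec] MDRI_def prevalence_law
    using law.set_integral_law_lag \<open>0 < r\<close> tail uniform by blast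
qed

lemma law_uniform_before:
  assumes cond: "cond_density P T ({\<omega> \<in> space P. T \<omega> \<le> t} \<inter> elig P A t) f"
    and flat: "\<And>u. u \<in> {0..r} \<Longrightarrow> f (t - u) = f t"
    and B: "B \<in> sets borel" "B \<subseteq> {t-r..t}"
  shows "measure (density_law g) B = prevalence P T A t * f t * measure lborel B"
proof -
  have "measure (density_law f) B = f t * measure lborel B"
  proof (rule measure_density_law_const)
    show "(\<lambda>s. ennreal (f s)) \<in> borel_measurable lborel" "0 \<le> f t"
      using cond by (auto simp: cond_density_def distributed_def)
    fix x assume "x \<in> B"
    then show "f x = f t"
      using flat[of "t - x"] B(2) by auto
  qed fact
  moreover have "B \<subseteq> {..t}"
    using B(2) by auto
  ultimately show ?thesis
    using law_restrict_infected[OF cond B(1)] by (simp add: mult.assoc)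
qed

end

theorem mainTheorem2:
  fixes P :: "'a measure" and T :: "'a \<Rightarrow> real" and A :: "real \<Rightarrow> 'a \<Rightarrow> bool"
    and Mk :: "'a \<Rightarrow> 'b" and R :: "'b set"
    and \<phi> g f :: "real \<Rightarrow> real" and t Ts \<beta> :: real
  assumes "prob_space P"
    and "T \<in> borel_measurable P"
    and "\<forall>s. elig P A s \<in> sets P"
    and "{\<omega> \<in> space P. Mk \<omega> \<in> R} \<in> sets P"
    and "measure P (elig P A t) > 0"
    and "cond_density P T (elig P A t) g" and "isCont g t"
    and "cond_density P T ({\<omega> \<in> space P. T \<omega> \<le> t} \<inter> elig P A t) f"
    and "is_recency_fn P T A Mk R t \<phi>"
    and "Ts > 0"
    and adj1: "\<forall>u \<ge> Ts. \<phi> u = \<beta>"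
    and adj2: "\<forall>u \<in> {0..Ts}. f (t - u) = f t"
    and "MDRI \<phi> Ts - \<beta> * Ts \<noteq> 0"
    and "prevalence P T A t < 1"
    and "continuous_on UNIV (prevalence P T A)"
  shows "(hazard_quot P T A t \<longlongrightarrow> incidence P T A t) (at_right 0)
    \<and> P_rec P T A Mk R t = (MDRI \<phi> Ts - \<beta> * Ts) * incidence P T A t * (1 - prevalence P T A t)
                            + prevalence P T A t * \<beta>
    \<and> incidence P T A t = (P_rec P T A Mk R t - \<beta> * prevalence P T A t)
                          / ((1 - prevalence P T A t) * (MDRI \<phi> Ts - \<beta> * Ts))"
proof -
  interpret eligible_population P T A t g
    using assms(1-3,5,6) by (simp add: eligible_population_def)
  define p where "p = prevalence P T A t"
  define \<Omega> where "\<Omega> = MDRI \<phi> Ts"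
  have uniform: "\<And>B. B \<in> sets borel \<Longrightarrow> B \<subseteq> {t-Ts..t} \<Longrightarrow>
      measure (density_law g) B = p * f t * measure lborel B"
    using law_uniform_before[where r = Ts, OF assms(8) adj2[rule_format]] by (simp add: p_def)
  have g_t: "g t = p * f t"
    using uniform \<open>Ts > 0\<close> by (intro law.density_eq_of_uniform_left[OF \<open>isCont g t\<close>]) auto
  have hazard: "(hazard_quot P T A t \<longlongrightarrow> g t / (1 - p)) (at_right 0)"
    using hazard_quot_tendsto \<open>isCont g t\<close> \<open>prevalence P T A t < 1\<close> by (simp add: p_def)
  then have incidence: "incidence P T A t = g t / (1 - p)"
    unfolding incidence_def by (intro tendsto_Lim) auto
  have nonzero: "1 - p \<noteq> 0" "\<Omega> - \<beta> * Ts \<noteq> 0"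
    using assms(13,14) by (auto simp: p_def \<Omega>_def)
  then have rate: "g t = incidence P T A t * (1 - p)"
    by (simp add: incidence)
  have "P_rec P T A Mk R t = \<beta> * (p - g t * Ts) + g t * \<Omega>"
    using P_rec_split[OF assms(9) \<open>Ts > 0\<close>] adj1 uniform by (simp add: g_t p_def \<Omega>_def)
  then have P_rec: "P_rec P T A Mk R t = (\<Omega> - \<beta> * Ts) * incidence P T A t * (1 - p) + p * \<beta>"
    unfolding rate by (simp add: algebra_simps)
  then have "P_rec P T A Mk R t - \<beta> * p = incidence P T A t * ((1 - p) * (\<Omega> - \<beta> * Ts))"
    by (simp add: algebra_simps)
  then have "incidence P T A t = (P_rec P T A Mk R t - \<beta> * p) / ((1 - p) * (\<Omega> - \<beta> * Ts))"
    using nonzero by (simp add: eq_divide_eq)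
  with hazard P_rec show ?thesis
    by (simp add: incidence p_def \<Omega>_def)
qed

end
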